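(* Let $1\le p'\le2$, let $R'\subseteq R$, $C'\subseteq C$ be finite, $I\subseteq R\times C$, $I'=I\cap(R'\times C')$, and let $x=\sum_{q\in I'}x_qe_q$ with scalar coefficients $x_q\in\mathbb C$. Then $$|\!|\!|x|\!|\!|_{p'}^{p'}\ \ge\ \sum_{(r,c)\in I'}\Bigl(\max\bigl(d(c),d(r)\bigr)^{1/2-1/p'}|x_{rc}|\Bigr)^{p'} .$$
   Context: $e_{rc}$ denotes the elementary matrix on $\ell_2$ (rows indexed by $R$, columns by $C$), $S^{p'}$ the Schatten class. For $1\le p'\le 2$ and a scalar matrix $x$, $$|\!|\!|x|\!|\!|_{p'}=\inf_{\alpha,\beta\in S^{p'},\ \alpha+\beta=x}\Bigl(\sum_c\Bigl(\sum_r|\alpha_{rc}|^2\Bigr)^{p'/2}\Bigr)^{1/p'}+\Bigl(\sum_r\Bigl(\sum_c|\beta_{rc}|^2\Bigr)^{p'/2}\Bigr)^{1/p'},$$ where $\alpha_{rc}$ denotes the $(r,c)$ matrix coefficient. For $c\in C'$, $d(c)=\#[I'\cap(R'\times\{c\})]$ and for $r\in R'$, $d(r)=\#[I'\cap(\{r\}\times C')]$ (degrees in the bipartite graph $I'$). *)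

theory Defs
  imports "HOL-Analysis.Analysis"
begin

text \<open>Scalar matrices on ell_2 are functions from row indices (type 'r, R = UNIV)
 and column indices (type 'c, C = UNIV) to complex numbers.\<close>

definition col_fin :: "real \<Rightarrow> ('r \<Rightarrow> 'c \<Rightarrow> complex) \<Rightarrow> bool" where
  "col_fin p a \<longleftrightarrow> (\<forall>c. (\<lambda>r. (cmod (a r c))\<^sup>2) summable_on UNIV) \<and>
     (\<lambda>c. (\<Sum>\<^sub>\<infinity>r. (cmod (a r c))\<^sup>2) powr (p/2)) summable_on UNIV"

definition row_fin :: "real \<Rightarrow> ('r \<Rightarrow> 'c \<Rightarrow> complex) \<Rightarrow> bool" where
  "row_fin p b \<longleftrightarrow> (\<forall>r. (\<lambda>c. (cmod (b r c))\<^sup>2) summable_on UNIV) \<and>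
     (\<lambda>r. (\<Sum>\<^sub>\<infinity>c. (cmod (b r c))\<^sup>2) powr (p/2)) summable_on UNIV"

definition col_norm :: "real \<Rightarrow> ('r \<Rightarrow> 'c \<Rightarrow> complex) \<Rightarrow> real" where
  "col_norm p a = (\<Sum>\<^sub>\<infinity>c. (\<Sum>\<^sub>\<infinity>r. (cmod (a r c))\<^sup>2) powr (p/2)) powr (1/p)"

definition row_norm :: "real \<Rightarrow> ('r \<Rightarrow> 'c \<Rightarrow> complex) \<Rightarrow> real" where
  "row_norm p b = (\<Sum>\<^sub>\<infinity>r. (\<Sum>\<^sub>\<infinity>c. (cmod (b r c))\<^sup>2) powr (p/2)) powr (1/p)"

text \<open>The norm |||x|||_p: infimum over decompositions x = a + b with finite
 mixed norms (for 1 <= p <= 2 these are exactly the decompositions in S^p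
 that contribute a finite value).\<close>
definition triple_norm :: "real \<Rightarrow> ('r \<Rightarrow> 'c \<Rightarrow> complex) \<Rightarrow> real" where
  "triple_norm p x = Inf {col_norm p a + row_norm p b | a b.
      (\<forall>r c. a r c + b r c = x r c) \<and> col_fin p a \<and> row_fin p b}"

end

theory Submission
  imports Defs
begin

text \<open>Write \<open>e = 1/2 - 1/p \<le> 0\<close>. For any splitting \<open>x = a + b\<close>, the weight
 \<open>max (d c) (d r) powr e\<close> is at most \<open>d c powr e\<close> and at most \<open>d r powr e\<close>. Inside a column
 with \<open>d\<close> entries the power-mean inequality
 \<open>\<Sum> |a r c| powr p \<le> d powr (1 - p/2) * (\<Sum> |a r c|\<^sup>2) powr (p/2)\<close> shows that the
 \<open>d c powr e\<close>-weighted entries of \<open>a\<close> have \<open>\<ell>\<^sup>p\<close>-norm at most the column mixed norm of \<open>a\<close>;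
 symmetrically for \<open>b\<close> and rows. Minkowski's inequality in \<open>\<ell>\<^sup>p(I')\<close> then bounds the weighted
 \<open>\<ell>\<^sup>p\<close>-norm of \<open>x\<close> by \<open>col_norm p a + row_norm p b\<close>, hence by the infimum over all splittings.\<close>

lemma powr_add_le_split:
  fixes p t u v :: real
  assumes p: "1 \<le> p" and t: "0 < t" "t < 1" and u: "0 \<le> u" and v: "0 \<le> v"
  shows "(u + v) powr p \<le> t powr (1 - p) * u powr p + (1 - t) powr (1 - p) * v powr p"
proof (cases "u = 0 \<or> v = 0")
  case True
  have "1 \<le> t powr (1 - p)" "1 \<le> (1 - t) powr (1 - p)"
    using t p by (auto intro!: powr_mono2'[of "1 - p" _ 1, simplified])
  then show ?thesis
    using True mult_right_mono[of 1 "t powr (1 - p)" "u powr p"]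
      mult_right_mono[of 1 "(1 - t) powr (1 - p)" "v powr p"] by auto
next
  case False
  then have "u > 0" "v > 0" using u v by auto
  have "((1 - (1 - t)) *\<^sub>R (u / t) + (1 - t) *\<^sub>R (v / (1 - t))) powr p
     \<le> (1 - (1 - t)) * (u / t) powr p + (1 - t) * (v / (1 - t)) powr p"
    by (rule convex_onD[OF powr_convex[OF p]]) (use t \<open>u > 0\<close> \<open>v > 0\<close> in auto)
  moreover have "(1 - (1 - t)) *\<^sub>R (u / t) + (1 - t) *\<^sub>R (v / (1 - t)) = u + v"
    using t by auto
  moreover have "t * (u / t) powr p = t powr (1 - p) * u powr p"
    using t \<open>u > 0\<close> by (simp add: powr_divide powr_diff field_simps)
  moreover have "(1 - t) * (v / (1 - t)) powr p = (1 - t) powr (1 - p) * v powr p"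
    using t \<open>v > 0\<close> by (simp add: powr_divide powr_diff field_simps)
  ultimately show ?thesis by simp
qed

lemma sum_powr_nonpos_imp_zero:
  fixes u :: "'a \<Rightarrow> real"
  assumes "finite S" "\<And>i. i \<in> S \<Longrightarrow> 0 \<le> u i" "(\<Sum>i\<in>S. u i powr p) \<le> 0" "i \<in> S"
  shows "u i = 0"
proof -
  have "(\<Sum>i\<in>S. u i powr p) = 0" using assms(3) by (simp add: antisym sum_nonneg)
  with assms(1,4) show ?thesis by (subst (asm) sum_nonneg_eq_0_iff) auto
qed

text \<open>Minkowski's inequality: sum \<open>powr_add_le_split\<close> with \<open>t = A / (A + B)\<close>.\<close>
lemma Minkowski_sum_powr:
  fixes u v :: "'a \<Rightarrow> real" and p A B :: real
  assumes S: "finite S" and p: "1 \<le> p"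
    and u: "\<And>i. i \<in> S \<Longrightarrow> 0 \<le> u i" and v: "\<And>i. i \<in> S \<Longrightarrow> 0 \<le> v i"
    and A: "0 \<le> A" and B: "0 \<le> B"
    and su: "(\<Sum>i\<in>S. u i powr p) \<le> A powr p" and sv: "(\<Sum>i\<in>S. v i powr p) \<le> B powr p"
  shows "(\<Sum>i\<in>S. (u i + v i) powr p) \<le> (A + B) powr p"
proof -
  consider "A = 0" | "B = 0" | "A > 0" "B > 0" using A B by linarith
  then show ?thesis
  proof cases
    case 1
    then have "u i = 0" if "i \<in> S" for i
      using sum_powr_nonpos_imp_zero[OF S u _ that] su by simp
    then show ?thesis using sv 1 by simp
  next
    case 2
    then have "v i = 0" if "i \<in> S" for i
      using sum_powr_nonpos_imp_zero[OF S v _ that] sv by simp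
    then show ?thesis using su 2 by simp
  next
    case 3
    define t where "t = A / (A + B)"
    have t: "0 < t" "t < 1" and one_minus_t: "1 - t = B / (A + B)"
      using 3 by (auto simp: t_def field_simps)
    have weight: "(X / (A + B)) powr (1 - p) * X powr p = X * (A + B) powr (p - 1)"
      if "X > 0" for X
    proof -
      have "(X / (A + B)) powr (1 - p) * X powr p = X powr (1 - p) * X powr p / (A + B) powr (1 - p)"
        using that 3 by (simp add: powr_divide)
      also have "\<dots> = X * inverse ((A + B) powr (1 - p))"
        using that by (simp add: divide_inverse flip: powr_add)
      also have "\<dots> = X * (A + B) powr (p - 1)"
        using powr_minus[of "A + B" "1 - p"] by simp
      finally show ?thesis .
    qed
    have "(\<Sum>i\<in>S. (u i + v i) powr p)
        \<le> (\<Sum>i\<in>S. t powr (1 - p) * u i powr p + (1 - t) powr (1 - p) * v i powr p)"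
      by (rule sum_mono, rule powr_add_le_split) (use p t u v in auto)
    also have "\<dots> = t powr (1 - p) * (\<Sum>i\<in>S. u i powr p) + (1 - t) powr (1 - p) * (\<Sum>i\<in>S. v i powr p)"
      by (simp add: sum.distrib sum_distrib_left)
    also have "\<dots> \<le> t powr (1 - p) * A powr p + (1 - t) powr (1 - p) * B powr p"
      using su sv by (intro add_mono mult_left_mono) auto
    also have "\<dots> = A * (A + B) powr (p - 1) + B * (A + B) powr (p - 1)"
      using weight[of A] weight[of B] 3 unfolding one_minus_t by (simp add: t_def)
    also have "\<dots> = (A + B) powr p"
      using powr_add[of "A + B" 1 "p - 1"] 3 by (simp add: distrib_right[symmetric])
    finally show ?thesis .
  qed
qed

text \<open>Power-mean inequality; the pointwise step is Young's inequality against the mean.\<close>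
lemma sum_powr_le_card_powr_sum:
  fixes y :: "'a \<Rightarrow> real" and s :: real
  assumes S: "finite S" and s: "0 < s" "s \<le> 1" and y: "\<And>i. i \<in> S \<Longrightarrow> 0 \<le> y i"
  shows "(\<Sum>i\<in>S. y i powr s) \<le> real (card S) powr (1 - s) * (\<Sum>i\<in>S. y i) powr s"
proof (cases "(\<Sum>i\<in>S. y i) = 0")
  case True
  then have "\<forall>i\<in>S. y i = 0" using S y by (subst (asm) sum_nonneg_eq_0_iff) auto
  then show ?thesis by simp
next
  case False
  define T where "T = (\<Sum>i\<in>S. y i)"
  define n where "n = real (card S)"
  define m where "m = T / n"
  have "T > 0" using False y by (simp add: T_def sum_nonneg order_less_le)
  moreover have "n > 0" using S False by (simp add: n_def card_gt_0_iff) (metis sum.empty)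
  ultimately have "m > 0" by (simp add: m_def)
  have Young: "y i powr s * m powr (1 - s) \<le> s * y i + (1 - s) * m" if "i \<in> S" for i
    using Youngs_inequality_0[of s "1 - s" "y i" m] s \<open>m > 0\<close> y[OF that]
    by (cases "y i = 0") auto
  have "(\<Sum>i\<in>S. y i powr s) * m powr (1 - s) = (\<Sum>i\<in>S. y i powr s * m powr (1 - s))"
    by (simp add: sum_distrib_right)
  also have "\<dots> \<le> (\<Sum>i\<in>S. s * y i + (1 - s) * m)" by (rule sum_mono) (use Young in auto)
  also have "\<dots> = s * T + (1 - s) * m * n" by (simp add: sum.distrib sum_distrib_left T_def n_def)
  also have "\<dots> = T" using \<open>n > 0\<close> by (simp add: m_def field_simps)
  finally have "(\<Sum>i\<in>S. y i powr s) \<le> T / m powr (1 - s)" using \<open>m > 0\<close> by (simp add: field_simps)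
  also have "\<dots> = n powr (1 - s) * T powr s"
    using \<open>T > 0\<close> \<open>n > 0\<close> by (simp add: m_def powr_divide powr_diff field_simps)
  finally show ?thesis by (simp add: n_def T_def)
qed

lemma sum_card_weighted_powr_le:
  fixes y :: "'a \<Rightarrow> real" and p :: real
  assumes K: "finite K" "K \<noteq> {}" and p: "1 \<le> p" "p \<le> 2" and y: "\<And>i. i \<in> K \<Longrightarrow> 0 \<le> y i"
  shows "(\<Sum>i\<in>K. (real (card K) powr (1/2 - 1/p) * y i) powr p) \<le> (\<Sum>i\<in>K. (y i)\<^sup>2) powr (p/2)"
proof -
  define d where "d = real (card K)"
  have "d \<ge> 1" using K by (simp add: d_def Suc_le_eq card_gt_0_iff)
  have term_eq: "(d powr (1/2 - 1/p) * y i) powr p = d powr (p/2 - 1) * ((y i)\<^sup>2) powr (p/2)"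
    if "i \<in> K" for i
  proof -
    have "(1/2 - 1/p) * p = p/2 - 1" using p by (simp add: field_simps)
    moreover have "((y i)\<^sup>2) powr (p/2) = y i powr p"
    proof -
      have "(y i)\<^sup>2 = y i powr 2" using y[OF that] by (cases "y i = 0") (simp_all add: powr_numeral)
      then show ?thesis by (simp add: powr_powr)
    qed
    ultimately show ?thesis
      using y[OF that] \<open>d \<ge> 1\<close> by (simp add: powr_mult powr_powr)
  qed
  have "(\<Sum>i\<in>K. (d powr (1/2 - 1/p) * y i) powr p) = d powr (p/2 - 1) * (\<Sum>i\<in>K. ((y i)\<^sup>2) powr (p/2))"
    by (simp add: term_eq sum_distrib_left)
  also have "\<dots> \<le> d powr (p/2 - 1) * (d powr (1 - p/2) * (\<Sum>i\<in>K. (y i)\<^sup>2) powr (p/2))"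
    by (rule mult_left_mono, unfold d_def, rule sum_powr_le_card_powr_sum) (use K p in auto)
  also have "\<dots> = (\<Sum>i\<in>K. (y i)\<^sup>2) powr (p/2)"
    using \<open>d \<ge> 1\<close> by (simp add: mult.assoc[symmetric] flip: powr_add)
  finally show ?thesis by (simp add: d_def)
qed

lemma col_degree_weighted_sum_le_col_norm:
  fixes J :: "('r \<times> 'c) set" and a :: "'r \<Rightarrow> 'c \<Rightarrow> complex" and p :: real
  assumes J: "finite J" and p: "1 \<le> p" "p \<le> 2" and a: "col_fin p a"
  shows "(\<Sum>(r, c)\<in>J. (real (card {r'. (r', c) \<in> J}) powr (1/2 - 1/p) * cmod (a r c)) powr p)
     \<le> col_norm p a powr p"
proof -
  define K where "K c = {r. (r, c) \<in> J}" for c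
  define f where "f r c = (real (card (K c)) powr (1/2 - 1/p) * cmod (a r c)) powr p" for r c
  define col where "col c = (\<Sum>\<^sub>\<infinity>r. (cmod (a r c))\<^sup>2) powr (p/2)" for c
  have K_finite: "finite (K c)" for c
    by (rule finite_subset[of _ "fst ` J"]) (use J in \<open>force simp: K_def\<close>)+
  have J_eq: "J = (\<lambda>(c, r). (r, c)) ` (SIGMA c:snd ` J. K c)" by (force simp: K_def)
  have "(\<Sum>(r, c)\<in>J. f r c) = (\<Sum>(c, r)\<in>(SIGMA c:snd ` J. K c). f r c)"
    by (subst J_eq, subst sum.reindex) (auto simp: inj_on_def case_prod_unfold)
  also have "\<dots> = (\<Sum>c\<in>snd ` J. \<Sum>r\<in>K c. f r c)"
    by (rule sum.Sigma[symmetric]) (use J K_finite in auto)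
  also have "\<dots> \<le> (\<Sum>c\<in>snd ` J. col c)"
  proof (rule sum_mono)
    fix c assume "c \<in> snd ` J"
    then have "K c \<noteq> {}" by (force simp: K_def)
    have "(\<Sum>r\<in>K c. f r c) \<le> (\<Sum>r\<in>K c. (cmod (a r c))\<^sup>2) powr (p/2)"
      unfolding f_def by (rule sum_card_weighted_powr_le) (use K_finite \<open>K c \<noteq> {}\<close> p in auto)
    also have "\<dots> \<le> col c"
      unfolding col_def using a p K_finite
      by (intro powr_mono2) (auto intro!: sum_nonneg finite_sum_le_infsum simp: col_fin_def)
    finally show "(\<Sum>r\<in>K c. f r c) \<le> col c" .
  qed
  also have "\<dots> \<le> (\<Sum>\<^sub>\<infinity>c. col c)"
    using a J by (intro finite_sum_le_infsum) (auto simp: col_fin_def col_def)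
  also have "\<dots> = col_norm p a powr p"
    using p by (simp add: col_norm_def col_def powr_powr infsum_nonneg)
  finally show ?thesis by (simp add: f_def K_def)
qed

lemma row_fin_iff_col_fin_transpose: "row_fin p b \<longleftrightarrow> col_fin p (\<lambda>c r. b r c)"
  by (simp add: row_fin_def col_fin_def)

lemma row_norm_eq_col_norm_transpose: "row_norm p b = col_norm p (\<lambda>c r. b r c)"
  by (simp add: row_norm_def col_norm_def)

lemma row_degree_weighted_sum_le_row_norm:
  fixes J :: "('r \<times> 'c) set" and b :: "'r \<Rightarrow> 'c \<Rightarrow> complex" and p :: real
  assumes J: "finite J" and p: "1 \<le> p" "p \<le> 2" and b: "row_fin p b"
  shows "(\<Sum>(r, c)\<in>J. (real (card {c'. (r, c') \<in> J}) powr (1/2 - 1/p) * cmod (b r c)) powr p)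
     \<le> row_norm p b powr p"
proof -
  have swap_degree: "{c'. (c', r) \<in> prod.swap ` J} = {c'. (r, c') \<in> J}" for r
    by force
  have "(\<Sum>(r, c)\<in>J. (real (card {c'. (r, c') \<in> J}) powr (1/2 - 1/p) * cmod (b r c)) powr p)
      = (\<Sum>(c, r)\<in>prod.swap ` J. (real (card {c'. (c', r) \<in> prod.swap ` J}) powr (1/2 - 1/p)
           * cmod (b r c)) powr p)"
    by (subst sum.reindex) (auto simp: case_prod_unfold swap_degree)
  also have "\<dots> \<le> row_norm p b powr p"
    unfolding row_norm_eq_col_norm_transpose
    by (rule col_degree_weighted_sum_le_col_norm) (use J p b in \<open>auto simp: row_fin_iff_col_fin_transpose\<close>)
  finally show ?thesis .
qed

lemma max_degree_weighted_sum_le: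
  fixes J :: "('r \<times> 'c) set" and a b :: "'r \<Rightarrow> 'c \<Rightarrow> complex" and p :: real
  assumes J: "finite J" and p: "1 \<le> p" "p \<le> 2" and a: "col_fin p a" and b: "row_fin p b"
  defines "w r c \<equiv> real (max (card {r'. (r', c) \<in> J}) (card {c'. (r, c') \<in> J})) powr (1/2 - 1/p)"
  shows "(\<Sum>(r, c)\<in>J. (w r c * cmod (a r c + b r c)) powr p) \<le> (col_norm p a + row_norm p b) powr p"
proof -
  have e: "1/2 - 1/p \<le> 0" using p by (simp add: field_simps)
  have degrees_pos: "card {r'. (r', c) \<in> J} > 0" "card {c'. (r, c') \<in> J} > 0" if "(r, c) \<in> J" for r c
  proof -
    have "{r'. (r', c) \<in> J} \<subseteq> fst ` J" "{c'. (r, c') \<in> J} \<subseteq> snd ` J" by force+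
    then show "card {r'. (r', c) \<in> J} > 0" "card {c'. (r, c') \<in> J} > 0"
      using that J by (auto simp: card_gt_0_iff intro: finite_subset)
  qed
  have w_le: "w r c \<le> real (card {r'. (r', c) \<in> J}) powr (1/2 - 1/p)"
    "w r c \<le> real (card {c'. (r, c') \<in> J}) powr (1/2 - 1/p)" if "(r, c) \<in> J" for r c
    unfolding w_def using degrees_pos[OF that] by (auto intro!: powr_mono2'[OF e])
  have w_nonneg: "0 \<le> w r c" for r c by (simp add: w_def)
  define u where "u q = w (fst q) (snd q) * cmod (a (fst q) (snd q))" for q
  define v where "v q = w (fst q) (snd q) * cmod (b (fst q) (snd q))" for q
  have "(\<Sum>(r, c)\<in>J. (w r c * cmod (a r c + b r c)) powr p) \<le> (\<Sum>q\<in>J. (u q + v q) powr p)"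
  proof (rule sum_mono, clarify)
    fix r c
    have "w r c * cmod (a r c + b r c) \<le> w r c * (cmod (a r c) + cmod (b r c))"
      by (rule mult_left_mono[OF norm_triangle_ineq w_nonneg])
    then show "(w r c * cmod (a r c + b r c)) powr p \<le> (u (r, c) + v (r, c)) powr p"
      using p w_nonneg by (intro powr_mono2) (auto simp: u_def v_def distrib_left)
  qed
  also have "\<dots> \<le> (col_norm p a + row_norm p b) powr p"
  proof (rule Minkowski_sum_powr[OF J p(1)])
    have "(\<Sum>q\<in>J. u q powr p)
        \<le> (\<Sum>(r, c)\<in>J. (real (card {r'. (r', c) \<in> J}) powr (1/2 - 1/p) * cmod (a r c)) powr p)"
      unfolding u_def using p w_le w_nonneg
      by (intro sum_mono) (auto intro!: powr_mono2 mult_right_mono)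
    also have "\<dots> \<le> col_norm p a powr p"
      by (rule col_degree_weighted_sum_le_col_norm[OF J p a])
    finally show "(\<Sum>q\<in>J. u q powr p) \<le> col_norm p a powr p" .
  next
    have "(\<Sum>q\<in>J. v q powr p)
        \<le> (\<Sum>(r, c)\<in>J. (real (card {c'. (r, c') \<in> J}) powr (1/2 - 1/p) * cmod (b r c)) powr p)"
      unfolding v_def using p w_le w_nonneg
      by (intro sum_mono) (auto intro!: powr_mono2 mult_right_mono)
    also have "\<dots> \<le> row_norm p b powr p"
      by (rule row_degree_weighted_sum_le_row_norm[OF J p b])
    finally show "(\<Sum>q\<in>J. v q powr p) \<le> row_norm p b powr p" .
  qed (auto simp: u_def v_def w_nonneg col_norm_def row_norm_def)
  finally show ?thesis .
qed

lemma col_fin_finite_support: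
  fixes x :: "'r \<Rightarrow> 'c \<Rightarrow> complex"
  assumes fin: "finite {(r, c). x r c \<noteq> 0}"
  shows "col_fin p x"
proof -
  have rows: "{r. x r c \<noteq> 0} \<subseteq> fst ` {(r, c). x r c \<noteq> 0}" for c by force
  have cols: "{c. (\<Sum>\<^sub>\<infinity>r. (cmod (x r c))\<^sup>2) powr (p/2) \<noteq> 0} \<subseteq> snd ` {(r, c). x r c \<noteq> 0}"
  proof
    fix c assume "c \<in> {c. (\<Sum>\<^sub>\<infinity>r. (cmod (x r c))\<^sup>2) powr (p/2) \<noteq> 0}"
    then obtain r where "x r c \<noteq> 0" by force
    then show "c \<in> snd ` {(r, c). x r c \<noteq> 0}" by force
  qed
  show ?thesis unfolding col_fin_def
    using finite_subset[OF rows] finite_subset[OF cols] fin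
    by (auto intro!: finite_nonzero_values_imp_summable_on)
qed

lemma powr_le_triple_norm_powr:
  fixes x :: "'r \<Rightarrow> 'c \<Rightarrow> complex" and p S :: real
  assumes p: "0 < p" and S: "0 \<le> S" and x: "col_fin p x"
    and bound: "\<And>a b. \<forall>r c. a r c + b r c = x r c \<Longrightarrow> col_fin p a \<Longrightarrow> row_fin p b \<Longrightarrow>
      S \<le> (col_norm p a + row_norm p b) powr p"
  shows "S \<le> triple_norm p x powr p"
proof -
  define N where "N = {col_norm p a + row_norm p b | a b.
    (\<forall>r c. a r c + b r c = x r c) \<and> col_fin p a \<and> row_fin p (b :: 'r \<Rightarrow> 'c \<Rightarrow> complex)}"
  have "row_fin p (\<lambda>_ _. 0 :: complex)" by (simp add: row_fin_def)
  moreover have "\<forall>r c. x r c + 0 = x r c" by simp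
  ultimately have "col_norm p x + row_norm p ((\<lambda>_ _. 0) :: 'r \<Rightarrow> 'c \<Rightarrow> complex) \<in> N"
    unfolding N_def using x by blast
  then have "N \<noteq> {}" by auto
  have "S powr (1/p) \<le> Inf N"
  proof (rule cInf_greatest[OF \<open>N \<noteq> {}\<close>])
    fix n assume "n \<in> N"
    then obtain a b where n: "n = col_norm p a + row_norm p b"
      and ab: "\<forall>r c. a r c + b r c = x r c" "col_fin p a" "row_fin p b" unfolding N_def by blast
    have "n \<ge> 0" by (simp add: n col_norm_def row_norm_def)
    have "S powr (1/p) \<le> (n powr p) powr (1/p)"
      using bound[OF ab] S p n by (intro powr_mono2) auto
    also have "\<dots> = n" using \<open>n \<ge> 0\<close> p by (simp add: powr_powr)
    finally show "S powr (1/p) \<le> n" .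
  qed
  then have "S powr (1/p) \<le> triple_norm p x" by (simp add: triple_norm_def N_def)
  then have "(S powr (1/p)) powr p \<le> triple_norm p x powr p" using p S by (intro powr_mono2) auto
  then show ?thesis using S p by (simp add: powr_powr)
qed

theorem lemma4p1:
  fixes p :: real and R' :: "'r set" and C' :: "'c set"
    and I :: "('r \<times> 'c) set" and xq :: "'r \<times> 'c \<Rightarrow> complex"
  assumes "1 \<le> p" "p \<le> 2" "finite R'" "finite C'"
  defines "I' \<equiv> I \<inter> (R' \<times> C')"
  defines "x \<equiv> (\<lambda>r c. if (r, c) \<in> I' then xq (r, c) else 0)"
  defines "dc \<equiv> (\<lambda>c. card (I' \<inter> (R' \<times> {c})))"
  defines "dr \<equiv> (\<lambda>r. card (I' \<inter> ({r} \<times> C')))"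
  shows "triple_norm p x powr p \<ge>
    (\<Sum>(r, c)\<in>I'. (real (max (dc c) (dr r)) powr (1/2 - 1/p) * cmod (xq (r, c))) powr p)"
proof (rule powr_le_triple_norm_powr)
  have "finite I'" unfolding I'_def using assms(3,4) by (auto intro: finite_subset)
  moreover have "{(r, c). x r c \<noteq> 0} \<subseteq> I'" by (auto simp: x_def)
  ultimately show "col_fin p x" by (blast intro: col_fin_finite_support finite_subset)
  have dc_eq: "dc c = card {r. (r, c) \<in> I'}" for c
  proof -
    have "I' \<inter> (R' \<times> {c}) = (\<lambda>r. (r, c)) ` {r. (r, c) \<in> I'}" by (auto simp: I'_def)
    then show ?thesis unfolding dc_def by (simp add: card_image inj_on_def)
  qed
  have dr_eq: "dr r = card {c. (r, c) \<in> I'}" for r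
  proof -
    have "I' \<inter> ({r} \<times> C') = (\<lambda>c. (r, c)) ` {c. (r, c) \<in> I'}" by (auto simp: I'_def)
    then show ?thesis unfolding dr_def by (simp add: card_image inj_on_def)
  qed
  fix a b assume ab: "\<forall>r c. a r c + b r c = x r c" "col_fin p a" "row_fin p b"
  have "(\<Sum>(r, c)\<in>I'. (real (max (dc c) (dr r)) powr (1/2 - 1/p) * cmod (xq (r, c))) powr p)
      = (\<Sum>(r, c)\<in>I'. (real (max (dc c) (dr r)) powr (1/2 - 1/p) * cmod (a r c + b r c)) powr p)"
    using ab(1) by (intro sum.cong) (auto simp: x_def)
  also have "\<dots> \<le> (col_norm p a + row_norm p b) powr p"
    unfolding dc_eq dr_eq by (rule max_degree_weighted_sum_le) (use \<open>finite I'\<close> assms(1,2) ab in auto)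
  finally show "(\<Sum>(r, c)\<in>I'. (real (max (dc c) (dr r)) powr (1/2 - 1/p) * cmod (xq (r, c))) powr p)
      \<le> (col_norm p a + row_norm p b) powr p" .
qed (use assms(1) in \<open>auto intro: sum_nonneg\<close>)

end
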